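(* Let $n\ge2$ be an integer, $l_k=\pi k/n$, $S_n=\sum_{k=1}^{n-1}\csc l_k$, $c_k=\cos\frac{\pi(2k-1)}{2n}$, $\sigma_k(\phi)=(1-c_k^2\cos^2\phi)^{1/2}$, $V(\phi)=\frac{S_n}{4\cos\phi}+\frac14\sum_{k=1}^n\frac{1}{\sigma_k(\phi)}$ and $W(\phi)=\cos\phi\,V(\phi)=\frac{S_n}{4}+\frac{\cos\phi}{4}\sum_{k=1}^n\frac1{\sigma_k(\phi)}$. Then (i) $W'(\phi)/W(\phi)\le0$ for all $\phi\in[0,\pi/2)$; (ii) if $n\ge10$, then $W(\pi/2)=S_n/4$ and $\left|W'(\phi)/W(\phi)\right|\le\frac45$ for all $\phi\in[\pi/4,\pi/2)$.
   Context: $V$ is the shape potential of the spatial double-polygon problem in Devaney-type coordinates; $W(\pi/2)$ denotes the value of the expression for $W$ at $\phi=\pi/2$. *)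

theory Defs
  imports "HOL-Analysis.Analysis"
begin

definition S_n :: "nat \<Rightarrow> real" where
  "S_n n = (\<Sum>k=1..n-1. 1 / sin (pi * real k / real n))"

definition c_k :: "nat \<Rightarrow> nat \<Rightarrow> real" where
  "c_k n k = cos (pi * (2 * real k - 1) / (2 * real n))"

definition sigma_k :: "nat \<Rightarrow> nat \<Rightarrow> real \<Rightarrow> real" where
  "sigma_k n k \<phi> = sqrt (1 - (c_k n k)\<^sup>2 * (cos \<phi>)\<^sup>2)"

definition V_pot :: "nat \<Rightarrow> real \<Rightarrow> real" where
  "V_pot n \<phi> = S_n n / (4 * cos \<phi>) + (1/4) * (\<Sum>k=1..n. 1 / sigma_k n k \<phi>)"

definition W_fun :: "nat \<Rightarrow> real \<Rightarrow> real" where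
  "W_fun n \<phi> = S_n n / 4 + (cos \<phi> / 4) * (\<Sum>k=1..n. 1 / sigma_k n k \<phi>)"

end

theory Submission
  imports Defs
begin

text \<open>Termwise, \<open>cos \<phi> / \<sigma>\<^sub>k(\<phi>)\<close> has derivative \<open>-sin \<phi> / \<sigma>\<^sub>k(\<phi>)\<^sup>3\<close>, so
  \<open>W' = -(sin \<phi> / 4) \<Sum> \<sigma>\<^sub>k\<^sup>-\<^sup>3 \<le> 0\<close> while \<open>W > 0\<close>. For the bound near \<open>\<pi>/2\<close> one uses
  \<open>\<sigma>\<^sup>-\<^sup>3 \<le> 1 + 4 c\<^sub>k\<^sup>2 cos\<^sup>2 \<phi>\<close> together with \<open>\<Sum> c\<^sub>k\<^sup>2 = n/2\<close>, giving
  \<open>|W'| \<le> (n/4) sin \<phi> (1 + 2 cos\<^sup>2 \<phi>)\<close>; on the other side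
  \<open>W \<ge> S\<^sub>n/4 + (n/4) cos \<phi>\<close>, and \<open>S\<^sub>n \<ge> 5n/4\<close> for \<open>n \<ge> 10\<close> by comparing the four
  smallest and four largest angles with \<open>sin x \<le> x\<close>. What remains is the one-variable
  inequality \<open>sin \<phi> (1 + 2 cos\<^sup>2 \<phi>) \<le> 1 + (4/5) cos \<phi>\<close> on \<open>[\<pi>/4, \<pi>/2]\<close>.\<close>

lemma sin_pi_mult_div_pos:
  assumes "0 < x" "x < real n"
  shows "sin (pi * x / real n) > 0"
proof (rule sin_gt_zero)
  show "0 < pi * x / real n" using assms by simp
  have "x / real n < 1" using assms by simp
  then show "pi * x / real n < pi"
    using mult_strict_left_mono[OF _ pi_gt_zero] by fastforce
qed

lemma sin_pi_mult_div_pos_nat: "k \<in> {1..n-1} \<Longrightarrow> sin (pi * real k / real n) > 0"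
  by (rule sin_pi_mult_div_pos) auto

lemma c_k_sq_less_one:
  assumes "1 \<le> k" "k \<le> n"
  shows "(c_k n k)\<^sup>2 < 1"
proof -
  have "sin (pi * ((2 * real k - 1) / 2) / real n) > 0"
    using assms by (intro sin_pi_mult_div_pos) auto
  then have "(sin (pi * (2 * real k - 1) / (2 * real n)))\<^sup>2 > 0" by simp
  then show ?thesis unfolding c_k_def by (simp add: cos_squared_eq)
qed

lemma sigma_k_sq:
  assumes "1 \<le> k" "k \<le> n"
  shows "(sigma_k n k x)\<^sup>2 = 1 - (c_k n k)\<^sup>2 * (cos x)\<^sup>2"
    and "1 - (c_k n k)\<^sup>2 * (cos x)\<^sup>2 > 0"
proof -
  have "(c_k n k)\<^sup>2 * (cos x)\<^sup>2 \<le> (c_k n k)\<^sup>2"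
    by (simp add: mult_left_le abs_square_le_1)
  then show "1 - (c_k n k)\<^sup>2 * (cos x)\<^sup>2 > 0"
    using c_k_sq_less_one[OF assms] by linarith
  then show "(sigma_k n k x)\<^sup>2 = 1 - (c_k n k)\<^sup>2 * (cos x)\<^sup>2"
    unfolding sigma_k_def by simp
qed

lemma sigma_k_pos: "1 \<le> k \<Longrightarrow> k \<le> n \<Longrightarrow> sigma_k n k x > 0"
  using sigma_k_sq(2) unfolding sigma_k_def by simp

lemma sigma_k_le_one: "sigma_k n k x \<le> 1"
  unfolding sigma_k_def by simp

lemma has_real_derivative_cos_div_sqrt:
  fixes c :: real
  assumes "c\<^sup>2 < 1"
  shows "((\<lambda>x. cos x / sqrt (1 - c\<^sup>2 * (cos x)\<^sup>2)) has_real_derivative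
          - sin x / (sqrt (1 - c\<^sup>2 * (cos x)\<^sup>2)) ^ 3) (at x)"
proof -
  define a where "a = 1 - c\<^sup>2 * (cos x)\<^sup>2"
  have "c\<^sup>2 * (cos x)\<^sup>2 \<le> c\<^sup>2" by (simp add: mult_left_le abs_square_le_1)
  then have a: "a > 0" using assms unfolding a_def by linarith
  have "((\<lambda>x. 1 - c\<^sup>2 * (cos x)\<^sup>2) has_real_derivative c\<^sup>2 * (2 * cos x * sin x)) (at x)"
    by (rule derivative_eq_intros refl)+ (simp add: power2_eq_square)
  from DERIV_chain2[OF DERIV_real_sqrt[OF a[unfolded a_def]] this]
  have "((\<lambda>x. sqrt (1 - c\<^sup>2 * (cos x)\<^sup>2)) has_real_derivative
          c\<^sup>2 * cos x * sin x / sqrt a) (at x)"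
    unfolding a_def by (rule DERIV_cong) (simp add: field_simps)
  from DERIV_divide[OF DERIV_cos this] a
  have "((\<lambda>x. cos x / sqrt (1 - c\<^sup>2 * (cos x)\<^sup>2)) has_real_derivative
      (- sin x * sqrt a - cos x * (c\<^sup>2 * cos x * sin x / sqrt a)) / (sqrt a * sqrt a)) (at x)"
    unfolding a_def by simp
  moreover have "(- sin x * sqrt a - cos x * (c\<^sup>2 * cos x * sin x / sqrt a)) / (sqrt a * sqrt a)
      = - sin x * (a + c\<^sup>2 * (cos x)\<^sup>2) / (sqrt a) ^ 3"
    using a by (simp add: field_simps power2_eq_square power3_eq_cube)
  ultimately show ?thesis unfolding a_def by simp
qed

lemma deriv_W_fun:
  "deriv (W_fun n) x = - (sin x / 4) * (\<Sum>k=1..n. 1 / (sigma_k n k x) ^ 3)"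
proof -
  have W_eq: "W_fun n = (\<lambda>x. S_n n / 4 + (1/4) * (\<Sum>k=1..n. cos x / sigma_k n k x))"
    unfolding W_fun_def by (rule ext) (simp add: sum_divide_distrib sum_distrib_left)
  have "((\<lambda>x. \<Sum>k=1..n. cos x / sigma_k n k x) has_real_derivative
         (\<Sum>k=1..n. - sin x / (sigma_k n k x) ^ 3)) (at x)"
  proof (rule DERIV_sum)
    fix k assume "k \<in> {1..n}"
    then show "((\<lambda>x. cos x / sigma_k n k x) has_real_derivative - sin x / (sigma_k n k x) ^ 3) (at x)"
      using has_real_derivative_cos_div_sqrt[OF c_k_sq_less_one] unfolding sigma_k_def by auto
  qed
  from DERIV_add[OF DERIV_const DERIV_cmult[OF this, of "1/4"]]
  have "deriv (W_fun n) x = 0 + (1/4) * (\<Sum>k=1..n. - sin x / (sigma_k n k x) ^ 3)"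
    unfolding W_eq by (rule DERIV_imp_deriv)
  then show ?thesis by (simp add: sum_distrib_left sum_negf)
qed

lemma sum_sin_mult_cos_odd:
  "(\<Sum>k=1..m. 2 * sin x * cos ((2 * real k - 1) * x)) = sin (2 * real m * x)"
proof (induction m)
  case 0
  then show ?case by simp
next
  case (Suc m)
  define z where "z = 2 * real m * x + x"
  have "(2 * real (Suc m) - 1) * x = z" "2 * real (Suc m) * x = z + x" "2 * real m * x = z - x"
    unfolding z_def by (simp_all add: algebra_simps)
  then have "sin (2 * real m * x) + 2 * sin x * cos ((2 * real (Suc m) - 1) * x)
      = sin (2 * real (Suc m) * x)"
    by (simp only:) (simp add: sin_add sin_diff algebra_simps)
  with Suc show ?case by simp
qed

lemma sum_c_k_sq:
  assumes "n \<ge> 2"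
  shows "(\<Sum>k=1..n. (c_k n k)\<^sup>2) = real n / 2"
proof -
  define x where "x = pi / real n"
  have "sin x > 0" unfolding x_def using sin_pi_mult_div_pos[of 1 n] assms by simp
  moreover have "2 * sin x * (\<Sum>k=1..n. cos ((2 * real k - 1) * x)) = sin (2 * real n * x)"
    using sum_sin_mult_cos_odd[of x n] by (simp add: sum_distrib_left mult.assoc)
  moreover have "sin (2 * real n * x) = 0" unfolding x_def using assms by simp
  ultimately have sum_cos: "(\<Sum>k=1..n. cos ((2 * real k - 1) * x)) = 0" by simp
  have c_k_sq: "(c_k n k)\<^sup>2 = (1 + cos ((2 * real k - 1) * x)) / 2" for k
  proof -
    have "(2 * real k - 1) * x = 2 * (pi * (2 * real k - 1) / (2 * real n))"
      unfolding x_def using assms by (simp add: field_simps)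
    then show ?thesis unfolding c_k_def by (simp only: cos_double_cos) simp
  qed
  then have "(\<Sum>k=1..n. (c_k n k)\<^sup>2) = (\<Sum>k=1..n. (1 + cos ((2 * real k - 1) * x)) / 2)"
    by (intro sum.cong refl) (rule c_k_sq)
  also have "\<dots> = (real n + (\<Sum>k=1..n. cos ((2 * real k - 1) * x))) / 2"
    by (simp add: sum_divide_distrib[symmetric] sum.distrib)
  finally show ?thesis using sum_cos by simp
qed

lemma inverse_cube_le:
  fixes s :: real
  assumes "0 \<le> s" "s \<le> 1" "1/2 \<le> s\<^sup>2"
  shows "1 / s ^ 3 \<le> 1 + 4 * (1 - s\<^sup>2)"
proof -
  have "s\<^sup>2 \<le> s" using assms by (simp add: power2_eq_square mult_left_le)
  moreover have "4 * s ^ 4 \<ge> 2 * s\<^sup>2" "4 * s ^ 3 \<ge> 2 * s"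
    using mult_left_mono[OF assms(3), of "4 * s\<^sup>2"] mult_left_mono[OF assms(3), of "4 * s"] assms
    by (simp_all add: power2_eq_square power3_eq_cube power4_eq_xxxx)
  ultimately have "4 * s ^ 4 + 4 * s ^ 3 - s\<^sup>2 - s - 1 \<ge> 0" using assms by linarith
  then have "(1 - s) * (4 * s ^ 4 + 4 * s ^ 3 - s\<^sup>2 - s - 1) \<ge> 0"
    using assms by simp
  moreover have "(1 - s) * (4 * s ^ 4 + 4 * s ^ 3 - s\<^sup>2 - s - 1) = s ^ 3 * (1 + 4 * (1 - s\<^sup>2)) - 1"
    by (simp add: algebra_simps power2_eq_square power3_eq_cube power4_eq_xxxx)
  moreover have "s > 0" using assms by (auto intro: ccontr)
  ultimately show ?thesis by (simp add: divide_le_eq mult.commute)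
qed

lemma sin_mult_one_plus_two_cos_sq_le:
  assumes "pi/4 \<le> x" "x \<le> pi/2"
  shows "sin x * (1 + 2 * (cos x)\<^sup>2) \<le> 1 + 4/5 * cos x"
proof -
  define u where "u = cos x"
  have u0: "u \<ge> 0" unfolding u_def using assms by (intro cos_ge_zero) auto
  have "u \<le> cos (pi/4)" unfolding u_def using assms by (intro cos_monotone_0_pi_le) auto
  then have "u\<^sup>2 \<le> (cos (pi/4))\<^sup>2" using u0 by (intro power_mono)
  then have u2: "u\<^sup>2 \<le> 1/2" by (simp add: cos_45 power_divide)
  have quintic: "8/5 - 59/25 * u + 4 * u ^ 5 \<ge> 0"
  proof (cases "u \<le> 1/2")
    case True
    moreover have "u ^ 5 \<ge> 0" using u0 by simp
    ultimately show ?thesis by linarith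
  next
    case False
    have "u\<^sup>2 \<le> (71/100)\<^sup>2" using u2 by (simp add: power2_eq_square)
    then have "u \<le> 71/100" by (rule power2_le_imp_le) simp
    moreover have "(1/2::real) ^ 5 \<le> u ^ 5" using False by (intro power_mono) auto
    ultimately show ?thesis by (simp add: power_divide)
  qed
  have "(sin x * (1 + 2 * u\<^sup>2))\<^sup>2 = (1 - u\<^sup>2) * (1 + 2 * u\<^sup>2)\<^sup>2"
    unfolding u_def by (simp add: power_mult_distrib sin_squared_eq)
  also have "\<dots> = (1 + 4/5 * u)\<^sup>2 - u * (8/5 - 59/25 * u + 4 * u ^ 5)"
    by (simp add: algebra_simps power2_eq_square eval_nat_numeral)
  also have "\<dots> \<le> (1 + 4/5 * u)\<^sup>2" using quintic u0 by simp
  finally show ?thesis unfolding u_def[symmetric] by (rule power2_le_imp_le) (use u0 in auto)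
qed

lemma S_n_nonneg: "S_n n \<ge> 0"
  unfolding S_n_def
  by (intro sum_nonneg) (simp add: less_imp_le sin_pi_mult_div_pos_nat)

lemma S_n_ge:
  assumes "n \<ge> 10"
  shows "S_n n \<ge> 5/4 * real n"
proof -
  define f where "f k = 1 / sin (pi * real k / real n)" for k
  define A where "A = {1..4::nat}"
  have f_nonneg: "f k \<ge> 0" if "k \<in> {1..n-1}" for k
    using sin_pi_mult_div_pos_nat[OF that] unfolding f_def by simp
  have f_reflect: "f (n - j) = f j" if "j \<le> n" for j
  proof -
    have "pi * real (n - j) / real n = pi - pi * real j / real n"
      using that assms by (simp add: of_nat_diff field_simps)
    then show ?thesis unfolding f_def by simp
  qed
  have f_ge: "f j \<ge> real n / (pi * real j)" if "1 \<le> j" "j < n" for j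
  proof -
    have "sin (pi * real j / real n) \<le> pi * real j / real n"
      by (rule sin_x_le_x) (use assms in simp)
    then have "1 / (pi * real j / real n) \<le> f j"
      unfolding f_def using sin_pi_mult_div_pos[of j n] that by (intro divide_left_mono) auto
    then show ?thesis by simp
  qed
  have A: "A \<union> (\<lambda>j. n - j) ` A \<subseteq> {1..n-1}" "A \<inter> (\<lambda>j. n - j) ` A = {}"
    "inj_on (\<lambda>j. n - j) A"
    using assms unfolding A_def by (auto simp: inj_on_def)
  have "sum f A + sum f ((\<lambda>j. n - j) ` A) = sum f (A \<union> (\<lambda>j. n - j) ` A)"
    using A(2) by (simp add: sum.union_disjoint A_def)
  also have "\<dots> \<le> S_n n"
    unfolding S_n_def f_def[symmetric] using A(1) f_nonneg by (intro sum_mono2) auto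
  finally have "2 * sum f A \<le> S_n n"
    using A(3) assms by (simp add: sum.reindex A_def f_reflect)
  moreover have "real n / pi * (25/12) \<le> sum f A"
  proof -
    have "(\<Sum>j\<in>A. real n / (pi * real j)) \<le> sum f A"
      using assms by (intro sum_mono f_ge) (auto simp: A_def)
    then show ?thesis unfolding A_def by (simp add: eval_nat_numeral field_simps)
  qed
  moreover have "5/4 * real n \<le> 2 * (real n / pi * (25/12))"
    using pi_approx mult_right_mono[of "5/4 * pi" "25/6" "real n"] pi_gt_zero
    by (simp add: field_simps)
  ultimately show ?thesis by linarith
qed

lemma sum_inverse_sigma_k_ge: "(\<Sum>k=1..n. 1 / sigma_k n k x) \<ge> real n"
proof -
  have "(\<Sum>k=1..n. (1::real)) \<le> (\<Sum>k=1..n. 1 / sigma_k n k x)"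
    using sigma_k_pos sigma_k_le_one by (intro sum_mono) (simp add: le_divide_eq)
  then show ?thesis by simp
qed

lemma sum_inverse_sigma_k_cube_le:
  assumes "n \<ge> 2" "(cos x)\<^sup>2 \<le> 1/2"
  shows "(\<Sum>k=1..n. 1 / (sigma_k n k x) ^ 3) \<le> real n * (1 + 2 * (cos x)\<^sup>2)"
proof -
  have "(\<Sum>k=1..n. 1 / (sigma_k n k x) ^ 3) \<le> (\<Sum>k=1..n. 1 + 4 * ((c_k n k)\<^sup>2 * (cos x)\<^sup>2))"
  proof (rule sum_mono)
    fix k assume k: "k \<in> {1..n}"
    have "(c_k n k)\<^sup>2 * (cos x)\<^sup>2 \<le> (cos x)\<^sup>2"
      using c_k_sq_less_one[of k n] k by (intro mult_left_le_one_le) auto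
    then show "1 / (sigma_k n k x) ^ 3 \<le> 1 + 4 * ((c_k n k)\<^sup>2 * (cos x)\<^sup>2)"
      using inverse_cube_le[of "sigma_k n k x"] sigma_k_sq(1)[of k n x] sigma_k_pos[of k n x]
        sigma_k_le_one[of n k x] k assms(2)
      by auto
  qed
  also have "\<dots> = real n + 4 * (cos x)\<^sup>2 * (\<Sum>k=1..n. (c_k n k)\<^sup>2)"
    by (simp add: sum.distrib sum_distrib_left sum_distrib_right algebra_simps)
  also have "\<dots> = real n * (1 + 2 * (cos x)\<^sup>2)"
    using sum_c_k_sq[OF assms(1)] by (simp add: algebra_simps)
  finally show ?thesis .
qed

lemma W_fun_pos:
  assumes "n \<ge> 1" "cos x > 0"
  shows "W_fun n x > 0"
  unfolding W_fun_def using S_n_nonneg[of n] sum_inverse_sigma_k_ge[of n x] assms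
  by (intro add_nonneg_pos mult_pos_pos) auto

lemma W_fun_log_deriv_nonpos:
  assumes "n \<ge> 1" "x \<in> {0..<pi/2}"
  shows "deriv (W_fun n) x / W_fun n x \<le> 0"
proof -
  have "cos x > 0" "sin x \<ge> 0" using assms(2) by (auto intro: cos_gt_zero_pi sin_ge_zero)
  moreover have "(\<Sum>k=1..n. 1 / (sigma_k n k x) ^ 3) \<ge> 0"
    using sigma_k_pos by (intro sum_nonneg) (simp add: less_imp_le)
  ultimately show ?thesis
    unfolding deriv_W_fun using W_fun_pos[OF assms(1)]
    by (intro divide_nonpos_pos) auto
qed

lemma W_fun_log_deriv_abs_le:
  assumes "n \<ge> 10" "x \<in> {pi/4..<pi/2}"
  shows "\<bar>deriv (W_fun n) x / W_fun n x\<bar> \<le> 4/5"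
proof -
  define A where "A = (\<Sum>k=1..n. 1 / (sigma_k n k x) ^ 3)"
  define B where "B = (\<Sum>k=1..n. 1 / sigma_k n k x)"
  have c: "cos x > 0" and s: "sin x \<ge> 0" using assms(2) by (auto intro: cos_gt_zero_pi sin_ge_zero)
  have "cos x \<le> cos (pi/4)" using assms(2) by (intro cos_monotone_0_pi_le) auto
  then have "(cos x)\<^sup>2 \<le> 1/2" using c power_mono[of "cos x" "cos (pi/4)" 2]
    by (simp add: cos_45 power_divide)
  then have "A \<le> real n * (1 + 2 * (cos x)\<^sup>2)"
    unfolding A_def using assms(1) by (intro sum_inverse_sigma_k_cube_le) auto
  from mult_left_mono[OF this s]
  have "sin x * A \<le> real n * (sin x * (1 + 2 * (cos x)\<^sup>2))" by (simp only: ac_simps)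
  also have "\<dots> \<le> real n * (1 + 4/5 * cos x)"
    using assms(2) by (intro mult_left_mono sin_mult_one_plus_two_cos_sq_le) auto
  also have "\<dots> \<le> 4/5 * S_n n + 4/5 * cos x * B"
  proof -
    have "cos x * real n \<le> cos x * B"
      unfolding B_def using sum_inverse_sigma_k_ge c by (intro mult_left_mono) auto
    then show ?thesis using S_n_ge[OF assms(1)] by (simp add: algebra_simps)
  qed
  also have "\<dots> = 16/5 * W_fun n x" unfolding W_fun_def B_def by simp
  finally have "sin x * A / 4 \<le> 4/5 * W_fun n x" by simp
  moreover have "A \<ge> 0"
    unfolding A_def using sigma_k_pos by (intro sum_nonneg) (simp add: less_imp_le)
  moreover have "W_fun n x > 0" using W_fun_pos c assms(1) by simp
  ultimately show ?thesis
    unfolding deriv_W_fun A_def[symmetric] using s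
    by (simp add: abs_divide abs_mult divide_le_eq)
qed

theorem lemma5p4:
  fixes n :: nat
  assumes "n \<ge> 2"
  shows "(\<forall>\<phi>\<in>{0..<pi/2}. W_fun n \<phi> = cos \<phi> * V_pot n \<phi>
            \<and> deriv (W_fun n) \<phi> / W_fun n \<phi> \<le> 0)
       \<and> (n \<ge> 10 \<longrightarrow>
            W_fun n (pi/2) = S_n n / 4
            \<and> (\<forall>\<phi>\<in>{pi/4..<pi/2}. \<bar>deriv (W_fun n) \<phi> / W_fun n \<phi>\<bar> \<le> 4/5))"
proof -
  have "W_fun n \<phi> = cos \<phi> * V_pot n \<phi>" if "\<phi> \<in> {0..<pi/2}" for \<phi>
  proof -
    have "cos \<phi> > 0" using that by (auto intro: cos_gt_zero_pi)
    then show ?thesis unfolding W_fun_def V_pot_def by (simp add: field_simps)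
  qed
  moreover have "W_fun n (pi/2) = S_n n / 4" by (simp add: W_fun_def)
  ultimately show ?thesis
    using assms W_fun_log_deriv_nonpos[of n] W_fun_log_deriv_abs_le[of n] by simp
qed

end
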